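(* Let $k$ be an imaginary quadratic field, and $\Gamma$ an arithmetic Kleinian group derived from a quaternion algebra over $k$. Then there exist $L,\epsilon>0$ such that if $\gamma\in\Gamma$ is a loxodromic element with $\ell(\gamma)>L$ and $0\le\mathrm{hol}(\gamma)<\epsilon$, then $\gamma^2$ realizes the systole of $\Gamma(\mathrm{tr}(\gamma))\backslash\mathbb{H}^3$, i.e. $\ell(\gamma^2)$ equals the minimal translation length of loxodromic elements of $\Gamma(\mathrm{tr}(\gamma))$.
   Context: $\Gamma<\mathrm{PSL}(2,\mathbb{C})$ is derived from a quaternion algebra over $k$ if there are a quaternion algebra $\mathcal{A}$ over $k$ ramified at all real places, an order $\mathcal{O}\subset\mathcal{A}$ and a $k$-embedding $\rho:\mathcal{A}\to M_2(\mathbb{C})$ with $\Gamma\subset\rho(\mathcal{O}^1)/\{\pm I\}$, where $\mathcal{O}^1$ is the group of reduced-norm-one elements. For an ideal $J\subset\mathcal{O}_k$, $\mathcal{O}^1(J)=\{g\in\mathcal{O}^1: g-1\in J\mathcal{O}\}$, and $\Gamma(J)$ is the image in $\Gamma$ of $\tilde\Gamma\cap\rho(\mathcal{O}^1(J))$, $\tilde\Gamma$ being the preimage of $\Gamma$ in $\mathrm{SL}(2,\mathbb{C})$; $\Gamma(t)$ means $\Gamma(t\mathcal{O}_k)$. For $\gamma=\pm\begin{pmatrix}a&b\\c&d\end{pmatrix}$, $\mathrm{tr}(\gamma)=\mu(a+d)$ with $\mu\in\{\pm1\}$ chosen so that $\mathrm{tr}(\gamma)=re^{i\theta}$, $r\ge0$,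 $\theta\in[0,\pi)$. If $\gamma$ is loxodromic and $\lambda_\gamma$ is its eigenvalue (for a lift) of modulus $>1$, then $\ell(\gamma)=2\log|\lambda_\gamma|$ is its translation length and $\mathrm{hol}(\gamma)=2\mathrm{Arg}(\lambda_\gamma)$ its holonomy, with $\mathrm{Arg}\in(-\pi,\pi)$. *)

theory Defs
  imports "HOL-Analysis.Analysis" "HOL-Computational_Algebra.Polynomial"
begin

type_synonym mat2 = "complex^2^2"

definition imag_quad_field :: "nat \<Rightarrow> complex set" where
  "imag_quad_field d = {of_rat a + of_rat b * \<i> * complex_of_real (sqrt (real d)) | a b. True}"

definition ring_of_integers :: "complex set \<Rightarrow> complex set" where
  "ring_of_integers k = {x \<in> k. algebraic_int x}"

definition smult2 :: "complex \<Rightarrow> mat2 \<Rightarrow> mat2" where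
  "smult2 c A = (\<chi> i j. c * A $ i $ j)"

definition tr2 :: "mat2 \<Rightarrow> complex" where
  "tr2 A = A $ 1 $ 1 + A $ 2 $ 2"

definition lin_comb :: "complex list \<Rightarrow> mat2 list \<Rightarrow> mat2" where
  "lin_comb cs bs = (\<Sum>i<length bs. smult2 (cs ! i) (bs ! i))"

definition span_over :: "complex set \<Rightarrow> mat2 list \<Rightarrow> mat2 set" where
  "span_over R bs = {lin_comb cs bs | cs. length cs = length bs \<and> set cs \<subseteq> R}"

text \<open>The image rho(A) of a quaternion algebra A over k under a k-embedding
  rho : A -> M_2(C): a k-subalgebra of M_2(C) with a k-basis of 4 elements which is
  C-linearly independent (so rho extends to A (x)_k C = M_2(C)).  Since k is imaginary
  quadratic it has no real places, so "ramified at all real places" is vacuous.\<close>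
definition quaternion_subalgebra :: "complex set \<Rightarrow> mat2 set \<Rightarrow> bool" where
  "quaternion_subalgebra k B \<longleftrightarrow>
     (\<exists>bs. length bs = 4 \<and> B = span_over k bs \<and>
        (\<forall>cs. length cs = 4 \<and> lin_comb cs bs = 0 \<longrightarrow> (\<forall>c\<in>set cs. c = 0))) \<and>
     mat 1 \<in> B \<and> (\<forall>x\<in>B. \<forall>y\<in>B. x ** y \<in> B)"

definition is_order :: "complex set \<Rightarrow> mat2 set \<Rightarrow> mat2 set \<Rightarrow> bool" where
  "is_order k B Ord \<longleftrightarrow> Ord \<subseteq> B \<and> mat 1 \<in> Ord \<and>
     (\<forall>x\<in>Ord. \<forall>y\<in>Ord. x + y \<in> Ord \<and> x - y \<in> Ord \<and> x ** y \<in> Ord) \<and>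
     (\<forall>c\<in>ring_of_integers k. \<forall>x\<in>Ord. smult2 c x \<in> Ord) \<and>
     (\<exists>gs. Ord = span_over (ring_of_integers k) gs) \<and>
     (\<exists>bs. set bs \<subseteq> Ord \<and> B = span_over k bs)"

text \<open>O^1: elements of reduced norm one (reduced norm = determinant after rho).\<close>
definition norm_one :: "mat2 set \<Rightarrow> mat2 set" where
  "norm_one Ord = {g \<in> Ord. det g = 1}"

text \<open>O^1(t O_k) = {g in O^1. g - 1 in t Ord} (note (t O_k) Ord = t Ord).\<close>
definition norm_one_cong :: "mat2 set \<Rightarrow> complex \<Rightarrow> mat2 set" where
  "norm_one_cong Ord t = {g \<in> norm_one Ord. \<exists>x\<in>Ord. g - mat 1 = smult2 t x}"

text \<open>Gt is the preimage in SL(2,C) of a subgroup Gamma of PSL(2,C) (so it contains -I).\<close>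
definition sl2_preimage_group :: "mat2 set \<Rightarrow> bool" where
  "sl2_preimage_group Gt \<longleftrightarrow> mat 1 \<in> Gt \<and> - mat 1 \<in> Gt \<and>
     (\<forall>g\<in>Gt. det g = 1 \<and> matrix_inv g \<in> Gt) \<and> (\<forall>g\<in>Gt. \<forall>h\<in>Gt. g ** h \<in> Gt)"

text \<open>Gamma is an arithmetic Kleinian group derived from a quaternion algebra over k:
  Gamma is contained in rho(O^1)/{+-I} and has finite index there (finite covolume).\<close>
definition arith_derived :: "complex set \<Rightarrow> mat2 set \<Rightarrow> mat2 set \<Rightarrow> mat2 set \<Rightarrow> bool" where
  "arith_derived k B Ord Gt \<longleftrightarrow> quaternion_subalgebra k B \<and> is_order k B Ord \<and>
     sl2_preimage_group Gt \<and> Gt \<subseteq> norm_one Ord \<and>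
     (\<exists>F. finite F \<and> norm_one Ord = {f ** g | f g. f \<in> F \<and> g \<in> Gt})"

text \<open>Preimage in SL(2,C) of Gamma(t O_k), the image of Gt \<inter> rho(O^1(t O_k)).\<close>
definition cong_subgroup :: "mat2 set \<Rightarrow> mat2 set \<Rightarrow> complex \<Rightarrow> mat2 set" where
  "cong_subgroup Ord Gt t = {h \<in> Gt. h \<in> norm_one_cong Ord t \<or> - h \<in> norm_one_cong Ord t}"

text \<open>Normalized trace tr(gamma) = mu (a+d) = r e^{i theta}, r >= 0, theta in [0,pi).\<close>
definition ntr :: "mat2 \<Rightarrow> complex" where
  "ntr g = (if tr2 g = 0 then 0 else if 0 \<le> Arg (tr2 g) \<and> Arg (tr2 g) < pi then tr2 g else - tr2 g)"

definition loxodromic :: "mat2 \<Rightarrow> bool" where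
  "loxodromic g \<longleftrightarrow> tr2 g \<notin> {complex_of_real x | x. -2 \<le> x \<and> x \<le> 2}"

definition lam :: "mat2 \<Rightarrow> complex" where
  "lam g = (SOME z. z^2 - ntr g * z + 1 = 0 \<and> cmod z > 1)"

definition transl_len :: "mat2 \<Rightarrow> real" where
  "transl_len g = 2 * ln (cmod (lam g))"

definition hol :: "mat2 \<Rightarrow> real" where
  "hol g = 2 * Arg (lam g)"

end

theory Submission
  imports Defs Jordan_Normal_Form.Char_Poly
begin

text \<open>
  Write t = ntr g and \<lambda> = lam g, so t = \<lambda> + 1/\<lambda>. By Cayley-Hamilton
  -g^2 = 1 + t (\<mp>g), hence g^2 \<in> \<Gamma>(t). Conversely every h \<in> \<Gamma>(t) is, up to sign,
  1 + t x with x in the order, and det h = 1 forces tr x = -t det x, so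
  tr h = \<plusminus>(2 - t^2 n) where n = det x is an algebraic integer of k. If n = 1, h has the
  trace of g^2 up to sign and hence the same translation length. Otherwise n \<noteq> 0 since h is
  loxodromic, and either |n|^2 \<ge> 2, or n is a unit other than 1, so Re n \<le> 1/2.
  Let R = |\<lambda>|^2 be large. In the first case |tr h| \<ge> 1.4 (R - 3) - 2. In the second,
  multiplying by the conjugate of n turns 2 - t^2 n into -(\<lambda>^2 + 1/\<lambda>^2 + 2 - 2 cnj n), where
  2 - 2 cnj n has real part at least 1 and small holonomy keeps \<lambda>^2 close to the positive
  real axis. Either way |tr h| \<ge> R + 1/R, which forces |lam h| \<ge> R = |lam (g^2)|.
  Neither d > 0 nor the finite-index condition of arith_derived is needed.
\<close>

section \<open>Algebraic integers\<close>

inductive_set int_span :: "complex set \<Rightarrow> complex set" for S where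
  int_span_0: "0 \<in> int_span S"
| int_span_base: "s \<in> S \<Longrightarrow> s \<in> int_span S"
| int_span_add: "x \<in> int_span S \<Longrightarrow> y \<in> int_span S \<Longrightarrow> x + y \<in> int_span S"
| int_span_uminus: "x \<in> int_span S \<Longrightarrow> - x \<in> int_span S"

lemma int_span_sum_repr:
  assumes "finite S" "x \<in> int_span S"
  obtains f :: "complex \<Rightarrow> int" where "x = (\<Sum>s\<in>S. of_int (f s) * s)"
proof -
  from assms(2) have "\<exists>f :: complex \<Rightarrow> int. x = (\<Sum>s\<in>S. of_int (f s) * s)"
  proof induction
    case int_span_0
    show ?case by (rule exI[of _ "\<lambda>_. 0"]) simp
  next
    case (int_span_base s)
    have "(\<Sum>t\<in>S. of_int (if t = s then 1 else 0) * t) = (\<Sum>t\<in>S. if t = s then t else 0)"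
      by (rule sum.cong) auto
    also have "\<dots> = s" using int_span_base assms(1) by (simp add: sum.delta')
    finally show ?case by metis
  next
    case (int_span_add x y)
    then obtain f g :: "complex \<Rightarrow> int"
      where "x = (\<Sum>s\<in>S. of_int (f s) * s)" "y = (\<Sum>s\<in>S. of_int (g s) * s)"
      by blast
    then show ?case
      by (intro exI[of _ "\<lambda>s. f s + g s"]) (simp add: distrib_right sum.distrib)
  next
    case (int_span_uminus x)
    then obtain f :: "complex \<Rightarrow> int" where "x = (\<Sum>s\<in>S. of_int (f s) * s)" by blast
    then show ?case
      by (intro exI[of _ "\<lambda>s. - f s"]) (simp add: sum_negf)
  qed
  with that show ?thesis by blast
qed

lemma int_span_mono:
  assumes "S \<subseteq> T" "x \<in> int_span S" shows "x \<in> int_span T"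
  using assms(2) by induction (use assms(1) in \<open>auto intro: int_span.intros\<close>)

lemma int_span_sum: "(\<And>i. i \<in> I \<Longrightarrow> f i \<in> int_span S) \<Longrightarrow> sum f I \<in> int_span S"
  by (induction I rule: infinite_finite_induct) (auto intro: int_span.intros)

lemma int_span_Ints_mult:
  assumes "z \<in> \<int>" "x \<in> int_span S"
  shows "z * x \<in> int_span S"
proof -
  have nat_mult: "of_nat n * x \<in> int_span S" for n :: nat
    using assms(2) by (induction n) (auto simp: distrib_right intro: int_span.intros)
  obtain m where m: "z = of_int m" using assms(1) by (auto elim: Ints_cases)
  show ?thesis
  proof (cases "m \<ge> 0")
    case True
    then show ?thesis using nat_mult[of "nat m"] m by simp
  next
    case False
    then show ?thesis using int_span_uminus[OF nat_mult[of "nat (- m)"]] m by simp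
  qed
qed

lemma int_span_mult_closed:
  assumes "\<And>s. s \<in> S \<Longrightarrow> c * s \<in> int_span T" "x \<in> int_span S"
  shows "c * x \<in> int_span T"
  using assms(2) by induction (auto simp: distrib_left intro: int_span.intros assms(1))

lemma int_span_mult_right: "z \<in> int_span S \<Longrightarrow> z * w \<in> int_span ((\<lambda>s. s * w) ` S)"
  by (induction rule: int_span.induct) (auto simp: distrib_right intro: int_span.intros)

lemma algebraic_int_eigenvalue_int_mat:
  fixes A :: "int mat" and \<mu> :: complex
  assumes A: "A \<in> carrier_mat n n" and ev: "eigenvalue (map_mat of_int A) \<mu>"
  shows "algebraic_int \<mu>"
proof -
  have "poly (char_poly (map_mat of_int A)) \<mu> = 0"
    using ev eigenvalue_root_char_poly[of "map_mat of_int A" n] A by auto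
  moreover have "char_poly (map_mat of_int A) = map_poly of_int (char_poly A)"
    by (rule of_int_hom.char_poly_hom[OF A])
  moreover have "lead_coeff (char_poly A) = 1"
    using degree_monic_char_poly[OF A] by simp
  ultimately show ?thesis
    unfolding algebraic_int_altdef_ipoly by metis
qed

lemma algebraic_intI_int_eigen:
  fixes a :: "nat \<Rightarrow> nat \<Rightarrow> int" and w :: "nat \<Rightarrow> complex"
  assumes eq: "\<And>i. i < n \<Longrightarrow> \<mu> * w i = (\<Sum>j<n. of_int (a i j) * w j)"
    and nz: "\<exists>i<n. w i \<noteq> 0"
  shows "algebraic_int \<mu>"
proof (rule algebraic_int_eigenvalue_int_mat)
  define A where "A = Matrix.mat n n (\<lambda>(i, j). a i j)"
  define v where "v = Matrix.vec n w"
  show A_carrier: "A \<in> carrier_mat n n" by (simp add: A_def)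
  have "map_mat of_int A *\<^sub>v v = \<mu> \<cdot>\<^sub>v v"
    using eq by (auto simp: A_def v_def mult_mat_vec_def scalar_prod_def atLeast0LessThan)
  moreover have "v \<noteq> 0\<^sub>v n"
    using nz by (auto simp: v_def vec_eq_iff)
  ultimately show "eigenvalue (map_mat of_int A) \<mu>"
    unfolding eigenvalue_def eigenvector_def by (intro exI[of _ v]) (simp add: A_def v_def)
qed

lemma algebraic_intI_int_span:
  assumes fin: "finite W" and nz: "\<exists>w\<in>W. w \<noteq> 0"
    and stable: "\<And>w. w \<in> W \<Longrightarrow> \<mu> * w \<in> int_span W"
  shows "algebraic_int \<mu>"
proof -
  obtain e where e: "bij_betw e {..<card W} W"
    using ex_bij_betw_nat_finite[OF fin] by (auto simp: atLeast0LessThan)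
  have reindex: "(\<Sum>s\<in>W. g s) = (\<Sum>j<card W. g (e j))" for g :: "complex \<Rightarrow> complex"
    using sum.reindex_bij_betw[OF e, of g] by simp
  have "\<forall>i. \<exists>f :: complex \<Rightarrow> int. i < card W \<longrightarrow> \<mu> * e i = (\<Sum>s\<in>W. of_int (f s) * s)"
    using int_span_sum_repr[OF fin stable] bij_betwE[OF e] by (metis lessThan_iff)
  then obtain F :: "nat \<Rightarrow> complex \<Rightarrow> int"
    where F: "\<And>i. i < card W \<Longrightarrow> \<mu> * e i = (\<Sum>s\<in>W. of_int (F i s) * s)"
    by metis
  show ?thesis
  proof (rule algebraic_intI_int_eigen[where w = e and a = "\<lambda>i j. F i (e j)"])
    show "\<mu> * e i = (\<Sum>j<card W. of_int (F i (e j)) * e j)" if "i < card W" for i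
      using F[OF that] reindex by simp
    show "\<exists>i<card W. e i \<noteq> 0"
      using nz bij_betw_imp_surj_on[OF e] by (metis imageE lessThan_iff)
  qed
qed

definition int_module_stable :: "complex set \<Rightarrow> complex set \<Rightarrow> bool" where
  "int_module_stable C M \<longleftrightarrow> finite M \<and> 1 \<in> M \<and> (\<forall>c\<in>C. \<forall>m\<in>M. c * m \<in> int_span M)"

lemma int_module_stable_int_span:
  assumes "int_module_stable C M" "c \<in> C" "x \<in> int_span M"
  shows "c * x \<in> int_span M"
  by (rule int_span_mult_closed[OF _ assms(3)]) (use assms(1,2) in \<open>simp add: int_module_stable_def\<close>)

lemma algebraic_int_power_reduction:
  assumes "algebraic_int (c :: complex)"
  obtains e a where "e > 0" "\<And>i. a i \<in> \<int>" "c ^ e = (\<Sum>i<e. a i * c ^ i)"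
proof -
  obtain p where p: "lead_coeff p = 1" "\<forall>i. coeff p i \<in> \<int>" "poly p c = 0"
    using assms by (auto elim: algebraic_int.cases)
  define e where "e = degree p"
  have "0 = (\<Sum>i\<le>e. coeff p i * c ^ i)" using p(3) by (simp add: poly_altdef e_def)
  also have "\<dots> = (\<Sum>i<e. coeff p i * c ^ i) + c ^ e"
    using p(1) by (simp add: lessThan_Suc_atMost[symmetric] e_def)
  finally have expand: "(\<Sum>i<e. coeff p i * c ^ i) + c ^ e = 0" by (rule sym)
  have "e \<noteq> 0"
  proof
    assume "e = 0"
    with expand show False by simp
  qed
  moreover have "c ^ e = (\<Sum>i<e. - coeff p i * c ^ i)"
    using expand by (simp add: sum_negf eq_neg_iff_add_eq_0 add.commute)
  moreover have "- coeff p i \<in> \<int>" for i using p(2) by simp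
  ultimately show ?thesis by (intro that[of e "\<lambda>i. - coeff p i"]) simp_all
qed

lemma int_module_stable_insert:
  assumes M: "int_module_stable C M" and c: "algebraic_int c"
  obtains M' where "int_module_stable (insert c C) M'"
proof -
  obtain e a where e: "e > 0" and a: "\<And>i. a i \<in> \<int>" and ce: "c ^ e = (\<Sum>i<e. a i * c ^ i)"
    using algebraic_int_power_reduction[OF c] by metis
  define M' where "M' = (\<lambda>(i, m). c ^ i * m) ` ({..<e} \<times> M)"
  have M_props: "finite M" "1 \<in> M" "\<And>c' m. c' \<in> C \<Longrightarrow> m \<in> M \<Longrightarrow> c' * m \<in> int_span M"
    using M by (auto simp: int_module_stable_def)
  have in_M': "c ^ i * m \<in> M'" if "i < e" "m \<in> M" for i m
    using that unfolding M'_def by (auto intro!: image_eqI[of _ _ "(i, m)"])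
  have power_mult: "c ^ i * x \<in> int_span M'" if "i < e" "x \<in> int_span M" for i x
    by (rule int_span_mult_closed[OF _ that(2)]) (auto intro: int_span_base in_M' that(1))
  have "c' * (c ^ i * m) \<in> int_span M'" if "c' \<in> insert c C" "i < e" "m \<in> M" for c' i m
  proof (cases "c' \<in> C")
    case True
    then have "c ^ i * (c' * m) \<in> int_span M'" using power_mult M_props that by blast
    then show ?thesis by (simp add: algebra_simps)
  next
    case False
    then have c': "c' = c" using that(1) by simp
    show ?thesis
    proof (cases "Suc i < e")
      case True
      then have "c ^ Suc i * m \<in> M'" using in_M' that(3) by blast
      then show ?thesis using c' by (simp add: int_span_base mult.assoc)
    next
      case False
      then have "Suc i = e" using that(2) by simp
      then have "c' * (c ^ i * m) = c ^ e * m" using c' by (simp flip: power_Suc add: mult.assoc)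
      also have "\<dots> = (\<Sum>j<e. a j * (c ^ j * m))"
        unfolding ce by (simp add: sum_distrib_right mult.assoc)
      also have "\<dots> \<in> int_span M'"
        by (intro int_span_sum int_span_Ints_mult a int_span_base in_M' that(3)) simp
      finally show ?thesis .
    qed
  qed
  moreover have "finite M'" "1 \<in> M'"
    using M_props in_M'[OF e, of 1] by (simp_all add: M'_def)
  ultimately have "int_module_stable (insert c C) M'"
    unfolding int_module_stable_def M'_def by auto
  then show ?thesis by (rule that)
qed

lemma int_module_stable_exists:
  assumes "finite C" "\<And>c. c \<in> C \<Longrightarrow> algebraic_int c"
  obtains M where "int_module_stable C M"
  using assms
proof (induction C arbitrary: thesis rule: finite_induct)
  case empty
  show ?case by (rule empty.prems(1)[of "{1}"]) (simp add: int_module_stable_def)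
next
  case (insert c C)
  then obtain M where "int_module_stable C M" by blast
  then show ?case using int_module_stable_insert insert.prems by blast
qed

lemma algebraic_intI_int_module_stable:
  assumes "int_module_stable C M" "\<And>m. m \<in> M \<Longrightarrow> \<mu> * m \<in> int_span M"
  shows "algebraic_int \<mu>"
  using assms by (intro algebraic_intI_int_span[of M]) (auto simp: int_module_stable_def)

lemma algebraic_int_add:
  assumes "algebraic_int (x :: complex)" "algebraic_int y"
  shows "algebraic_int (x + y)"
proof -
  obtain M where M: "int_module_stable {x, y} M"
    using int_module_stable_exists[of "{x, y}"] assms by auto
  show ?thesis
    by (rule algebraic_intI_int_module_stable[OF M])
      (use M in \<open>auto simp: int_module_stable_def distrib_right intro: int_span_add\<close>)
qed

lemma algebraic_int_mult:
  assumes "algebraic_int (x :: complex)" "algebraic_int y"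
  shows "algebraic_int (x * y)"
proof -
  obtain M where M: "int_module_stable {x, y} M"
    using int_module_stable_exists[of "{x, y}"] assms by auto
  show ?thesis
  proof (rule algebraic_intI_int_module_stable[OF M])
    fix m assume "m \<in> M"
    then have "y * m \<in> int_span M" using M by (simp add: int_module_stable_def)
    then have "x * (y * m) \<in> int_span M" using int_module_stable_int_span[OF M, of x] by simp
    then show "x * y * m \<in> int_span M" by (simp add: mult.assoc)
  qed
qed

lemma algebraic_intI_algebraic_int_eigen:
  fixes w :: "'j \<Rightarrow> complex"
  assumes J: "finite J" and nz: "\<exists>j\<in>J. w j \<noteq> 0"
    and eq: "\<And>j. j \<in> J \<Longrightarrow> \<mu> * w j = (\<Sum>l\<in>J. a j l * w l)"
    and a: "\<And>j l. j \<in> J \<Longrightarrow> l \<in> J \<Longrightarrow> algebraic_int (a j l)"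
  shows "algebraic_int \<mu>"
proof -
  define C where "C = (\<lambda>(j, l). a j l) ` (J \<times> J)"
  have "finite C" "\<And>c. c \<in> C \<Longrightarrow> algebraic_int c" using J a by (auto simp: C_def)
  then obtain M where M: "int_module_stable C M" by (rule int_module_stable_exists)
  define W where "W = (\<lambda>(m, l). m * w l) ` (M \<times> J)"
  show ?thesis
  proof (rule algebraic_intI_int_span[of W])
    show "finite W" using M J by (auto simp: W_def int_module_stable_def)
    show "\<exists>u\<in>W. u \<noteq> 0"
      using M nz unfolding W_def int_module_stable_def by (auto intro!: bexI[of _ "(1, _)"])
    show "\<mu> * u \<in> int_span W" if "u \<in> W" for u
    proof -
      obtain m j where mj: "m \<in> M" "j \<in> J" "u = m * w j" using \<open>u \<in> W\<close> by (auto simp: W_def)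
      have "\<mu> * u = m * (\<mu> * w j)" using mj(3) by (simp add: algebra_simps)
      also have "\<dots> = (\<Sum>l\<in>J. (a j l * m) * w l)"
        unfolding eq[OF mj(2)] sum_distrib_left by (simp add: algebra_simps)
      also have "\<dots> \<in> int_span W"
      proof (rule int_span_sum)
        fix l assume l: "l \<in> J"
        have "a j l * m \<in> int_span M"
          using M mj l unfolding int_module_stable_def C_def by blast
        then have "a j l * m * w l \<in> int_span ((\<lambda>s. s * w l) ` M)"
          by (rule int_span_mult_right)
        then show "a j l * m * w l \<in> int_span W"
          by (rule int_span_mono[rotated]) (use l in \<open>auto simp: W_def\<close>)
      qed
      finally show ?thesis .
    qed
  qed
qed

section \<open>Two-by-two matrices\<close>

hide_const (open) Matrix.mat Determinant.det Matrix.vec Matrix.row Matrix.col Matrix.transpose_mat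

lemma smult2_0 [simp]: "smult2 0 A = 0"
  and smult2_1 [simp]: "smult2 1 A = A"
  by (simp_all add: smult2_def Finite_Cartesian_Product.vec_eq_iff)

lemma smult2_uminus: "smult2 c (- A) = - smult2 c A" "smult2 (- c) A = - smult2 c A"
  by (simp_all add: smult2_def Finite_Cartesian_Product.vec_eq_iff)

lemma tr2_uminus: "tr2 (- A) = - tr2 A"
  by (simp add: tr2_def)

lemma det_uminus_mat2: "det (- (A :: mat2)) = det A"
  by (simp add: det_2)

lemma mat2_one_neq_zero: "(mat 1 :: mat2) \<noteq> 0"
proof
  assume "(mat 1 :: mat2) = 0"
  then have "(mat 1 :: mat2) $ 1 $ 1 = 0" by simp
  then show False by (simp add: Finite_Cartesian_Product.mat_def)
qed

lemma mat2_cayley_hamilton: "(A :: mat2) ** A = smult2 (tr2 A) A - smult2 (det A) (mat 1)"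
  by (simp add: Finite_Cartesian_Product.vec_eq_iff Finite_Cartesian_Product.mat_def forall_2
      matrix_matrix_mult_def sum_2 det_2 tr2_def smult2_def algebra_simps)

lemma tr2_mult_self: "tr2 ((A :: mat2) ** A) = (tr2 A)\<^sup>2 - 2 * det A"
  by (simp add: tr2_def det_2 matrix_matrix_mult_def sum_2 power2_eq_square algebra_simps)

lemma det_smult2_mat1: "det (smult2 c (mat 1)) = c\<^sup>2"
  by (simp add: det_2 smult2_def Finite_Cartesian_Product.mat_def power2_eq_square)

lemma det_mat1_add_smult2: "det (mat 1 + smult2 t A) = 1 + t * tr2 A + t\<^sup>2 * det A"
  by (simp add: det_2 tr2_def smult2_def Finite_Cartesian_Product.mat_def power2_eq_square algebra_simps)

lemma tr2_mat1_add_smult2: "tr2 (mat 1 + smult2 t A) = 2 + t * tr2 A"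
  by (simp add: tr2_def smult2_def Finite_Cartesian_Product.mat_def algebra_simps)

lemma mat2_mult_vec_scalar: "(A :: mat2) *v (c *s v) = c *s (A *v v)"
  by (simp add: Finite_Cartesian_Product.vec_eq_iff matrix_vector_mult_def vector_scalar_mult_def sum_distrib_left
      algebra_simps)

lemma lin_comb_mult_vec_nth:
  "(lin_comb cs bs *v v) $ p = (\<Sum>l<length bs. cs ! l * ((bs ! l *v v) $ p))"
  unfolding lin_comb_def smult2_def matrix_vector_mult_def
  by (simp add: sum_component sum_distrib_left sum_distrib_right mult.assoc sum.swap[of _ UNIV])

lemma mat2_eigenvector_exists:
  fixes A :: mat2
  assumes "\<mu>\<^sup>2 - tr2 A * \<mu> + det A = 0"
  obtains v :: "complex^2" where "v \<noteq> 0" "A *v v = \<mu> *s v"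
proof -
  define a b c e where "a = A$1$1" "b = A$1$2" "c = A$2$1" "e = A$2$2"
  have char: "(a - \<mu>) * (e - \<mu>) = b * c"
    using assms unfolding a_b_c_e_def tr2_def det_2 by (simp add: power2_eq_square algebra_simps)
  have eigen_iff: "A *v v = \<mu> *s v \<longleftrightarrow> a * v$1 + b * v$2 = \<mu> * v$1 \<and> c * v$1 + e * v$2 = \<mu> * v$2"
    for v
    unfolding Finite_Cartesian_Product.vec_eq_iff forall_2 a_b_c_e_def by (simp add: matrix_vector_mult_def sum_2)
  have nonzero: "v$1 \<noteq> 0 \<or> v$2 \<noteq> 0 \<Longrightarrow> v \<noteq> 0" for v :: "complex^2" by auto
  consider "b \<noteq> 0 \<or> \<mu> \<noteq> a"
    | "b = 0" "\<mu> = a" "\<mu> \<noteq> e \<or> c \<noteq> 0"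
    | "b = 0" "\<mu> = a" "\<mu> = e" "c = 0"
    by blast
  then show ?thesis
  proof cases
    case 1
    show ?thesis
    proof (rule that)
      show "vector [b, \<mu> - a] \<noteq> (0 :: complex^2)" using 1 by (intro nonzero) simp
      show "A *v vector [b, \<mu> - a] = \<mu> *s vector [b, \<mu> - a]"
        using char by (simp add: eigen_iff algebra_simps)
    qed
  next
    case 2
    show ?thesis
    proof (rule that)
      show "vector [\<mu> - e, c] \<noteq> (0 :: complex^2)" using 2 by (intro nonzero) simp
      show "A *v vector [\<mu> - e, c] = \<mu> *s vector [\<mu> - e, c]"
        unfolding eigen_iff using 2 by (simp add: algebra_simps)
    qed
  next
    case 3
    show ?thesis
    proof (rule that)
      show "vector [1, 0] \<noteq> (0 :: complex^2)" by (intro nonzero) simp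
      show "A *v vector [1, 0] = \<mu> *s vector [1, 0]" unfolding eigen_iff using 3 by simp
    qed
  qed
qed

lemma mat2_eigenvalues:
  fixes A :: mat2
  obtains \<mu>1 \<mu>2 v1 v2 where "\<mu>1 * \<mu>2 = det A"
    "v1 \<noteq> 0" "A *v v1 = \<mu>1 *s v1" "v2 \<noteq> 0" "A *v v2 = \<mu>2 *s v2"
proof -
  define s where "s = csqrt ((tr2 A)\<^sup>2 - 4 * det A)"
  have s2: "s\<^sup>2 = (tr2 A)\<^sup>2 - 4 * det A" by (simp add: s_def)
  define \<mu>1 \<mu>2 where "\<mu>1 = (tr2 A + s) / 2" "\<mu>2 = (tr2 A - s) / 2"
  have "\<mu>1 * \<mu>2 = det A - (s\<^sup>2 - ((tr2 A)\<^sup>2 - 4 * det A)) / 4"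
    "\<mu>1\<^sup>2 - tr2 A * \<mu>1 + det A = (s\<^sup>2 - ((tr2 A)\<^sup>2 - 4 * det A)) / 4"
    "\<mu>2\<^sup>2 - tr2 A * \<mu>2 + det A = (s\<^sup>2 - ((tr2 A)\<^sup>2 - 4 * det A)) / 4"
    unfolding \<mu>1_\<mu>2_def by (simp_all add: field_simps power2_eq_square)
  then have "\<mu>1 * \<mu>2 = det A" "\<mu>1\<^sup>2 - tr2 A * \<mu>1 + det A = 0" "\<mu>2\<^sup>2 - tr2 A * \<mu>2 + det A = 0"
    unfolding s2 by simp_all
  with mat2_eigenvector_exists show ?thesis using that by metis
qed

section \<open>Orders\<close>

lemma span_over_nth_mem:
  assumes "0 \<in> R" "1 \<in> R" "j < length gs"
  shows "gs ! j \<in> span_over R gs"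
proof -
  let ?cs = "map (\<lambda>l. if l = j then 1 else 0) [0..<length gs]"
  have "lin_comb ?cs gs = (\<Sum>l<length gs. if l = j then gs ! l else 0)"
    unfolding lin_comb_def by (intro sum.cong) auto
  also have "\<dots> = gs ! j" using assms(3) by (simp add: sum.delta)
  finally show ?thesis
    using assms(1,2) unfolding span_over_def by (auto intro!: exI[of _ ?cs])
qed

lemma order_mult_right_coeffs:
  assumes ord: "is_order k B Ord" and k: "0 \<in> k" "1 \<in> k"
    and gs: "Ord = span_over (ring_of_integers k) gs" and x: "x \<in> Ord"
  obtains CS where "\<And>j. j < length gs \<Longrightarrow> length (CS j) = length gs \<and>
      set (CS j) \<subseteq> ring_of_integers k \<and> gs ! j ** x = lin_comb (CS j) gs"
proof -
  have "\<forall>j<length gs. \<exists>cs. length cs = length gs \<and> set cs \<subseteq> ring_of_integers k \<and>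
      gs ! j ** x = lin_comb cs gs"
  proof (intro allI impI)
    fix j assume "j < length gs"
    then have "gs ! j \<in> Ord"
      using span_over_nth_mem[of "ring_of_integers k"] k gs by (simp add: ring_of_integers_def)
    then have "gs ! j ** x \<in> span_over (ring_of_integers k) gs"
      using ord x gs by (simp add: is_order_def)
    then show "\<exists>cs. length cs = length gs \<and> set cs \<subseteq> ring_of_integers k \<and>
        gs ! j ** x = lin_comb cs gs"
      by (auto simp: span_over_def)
  qed
  with that show ?thesis by metis
qed

lemma order_eigenvalue_algebraic_int:
  assumes ord: "is_order k B Ord" and k: "0 \<in> k" "1 \<in> k"
    and x: "x \<in> Ord" and v: "v \<noteq> 0" "x *v v = \<mu> *s v"
  shows "algebraic_int \<mu>"
proof -
  obtain gs where gs: "Ord = span_over (ring_of_integers k) gs" using ord by (auto simp: is_order_def)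
  define n where "n = length gs"
  obtain CS where CS: "\<And>j. j < n \<Longrightarrow> length (CS j) = n \<and>
      set (CS j) \<subseteq> ring_of_integers k \<and> gs ! j ** x = lin_comb (CS j) gs"
    using order_mult_right_coeffs[OF ord k gs x] unfolding n_def by blast
  obtain es where es: "mat 1 = lin_comb es gs"
    using ord gs unfolding is_order_def span_over_def by auto
  obtain p where p: "v $ p \<noteq> 0"
    using v(1) by (metis Finite_Cartesian_Product.vec_eq_iff zero_index)
  define w where "w l = (gs ! l *v v) $ p" for l
  show ?thesis
  proof (rule algebraic_intI_algebraic_int_eigen[of "{..<n}" w \<mu> "\<lambda>j l. CS j ! l"])
    have "v $ p = (\<Sum>l<n. es ! l * w l)"
      using lin_comb_mult_vec_nth[of es gs v p] by (simp add: w_def n_def flip: es)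
    then show "\<exists>j\<in>{..<n}. w j \<noteq> 0"
      using p by (metis (no_types, lifting) mult_zero_right sum.neutral)
    show "\<mu> * w j = (\<Sum>l\<in>{..<n}. CS j ! l * w l)" if "j \<in> {..<n}" for j
    proof -
      have "\<mu> * w j = ((gs ! j ** x) *v v) $ p"
        by (simp add: w_def v(2) mat2_mult_vec_scalar flip: matrix_vector_mul_assoc)
      also have "\<dots> = (\<Sum>l<n. CS j ! l * w l)"
        using CS[of j] that by (simp add: lin_comb_mult_vec_nth w_def n_def)
      finally show ?thesis .
    qed
    show "algebraic_int (CS j ! l)" if "j \<in> {..<n}" "l \<in> {..<n}" for j l
    proof -
      have "CS j ! l \<in> set (CS j)" using CS[of j] that by simp
      then show ?thesis using CS[of j] that unfolding ring_of_integers_def by blast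
    qed
  qed simp
qed

lemma order_det_algebraic_int:
  assumes "is_order k B Ord" "0 \<in> k" "1 \<in> k" "x \<in> Ord"
  shows "algebraic_int (det x)"
proof -
  obtain \<mu>1 \<mu>2 v1 v2
    where "\<mu>1 * \<mu>2 = det x" "v1 \<noteq> 0" "x *v v1 = \<mu>1 *s v1" "v2 \<noteq> 0" "x *v v2 = \<mu>2 *s v2"
    by (rule mat2_eigenvalues)
  with order_eigenvalue_algebraic_int[OF assms] algebraic_int_mult show ?thesis by metis
qed

section \<open>The field \<open>\<rat>(\<surd>-d)\<close>\<close>

lemma of_rat_complex: "(of_rat r :: complex) = complex_of_real (of_rat r)"
  by (cases r) (simp add: of_rat_rat)

lemma imag_quad_field_iff:
  "x \<in> imag_quad_field d \<longleftrightarrow> (\<exists>a\<in>\<rat>. \<exists>b\<in>\<rat>. x = Complex a (b * sqrt (real d)))"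
proof -
  have "of_rat a + of_rat b * \<i> * complex_of_real (sqrt (real d))
      = Complex (of_rat a) (of_rat b * sqrt (real d))" for a b
    by (simp add: complex_eq_iff of_rat_complex)
  then show ?thesis
    unfolding imag_quad_field_def by (auto elim!: Rats_cases) (use Rats_of_rat in blast)
qed

lemma imag_quad_fieldI:
  "a \<in> \<rat> \<Longrightarrow> b \<in> \<rat> \<Longrightarrow> x = Complex a (b * sqrt (real d)) \<Longrightarrow> x \<in> imag_quad_field d"
  using imag_quad_field_iff by blast

lemma imag_quad_fieldE:
  assumes "x \<in> imag_quad_field d"
  obtains a b where "a \<in> \<rat>" "b \<in> \<rat>" "x = Complex a (b * sqrt (real d))"
  using assms imag_quad_field_iff by blast

lemma imag_quad_field_0: "0 \<in> imag_quad_field d"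
  and imag_quad_field_1: "1 \<in> imag_quad_field d"
  by (rule imag_quad_fieldI[of 0 0], simp_all add: complex_eq_iff)
    (rule imag_quad_fieldI[of 1 0], simp_all add: complex_eq_iff)

lemma imag_quad_field_diff:
  assumes "x \<in> imag_quad_field d" "y \<in> imag_quad_field d"
  shows "x - y \<in> imag_quad_field d"
proof -
  obtain a b a' b' where "a \<in> \<rat>" "b \<in> \<rat>" "x = Complex a (b * sqrt (real d))"
    "a' \<in> \<rat>" "b' \<in> \<rat>" "y = Complex a' (b' * sqrt (real d))"
    using assms by (metis imag_quad_fieldE)
  then show ?thesis
    by (intro imag_quad_fieldI[of "a - a'" "b - b'"]) (simp_all add: complex_eq_iff algebra_simps)
qed

lemma imag_quad_field_mult:
  assumes "x \<in> imag_quad_field d" "y \<in> imag_quad_field d"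
  shows "x * y \<in> imag_quad_field d"
proof -
  obtain a b a' b' where "a \<in> \<rat>" "b \<in> \<rat>" "x = Complex a (b * sqrt (real d))"
    "a' \<in> \<rat>" "b' \<in> \<rat>" "y = Complex a' (b' * sqrt (real d))"
    using assms by (metis imag_quad_fieldE)
  then show ?thesis
    by (intro imag_quad_fieldI[of "a * a' - b * b' * real d" "a * b' + b * a'"])
      (simp_all add: complex_eq_iff algebra_simps)
qed

lemma imag_quad_field_inverse:
  assumes "x \<in> imag_quad_field d"
  shows "inverse x \<in> imag_quad_field d"
proof -
  obtain a b where ab: "a \<in> \<rat>" "b \<in> \<rat>" "x = Complex a (b * sqrt (real d))"
    using assms by (rule imag_quad_fieldE)
  define N where "N = a\<^sup>2 + b\<^sup>2 * real d"
  have "N \<in> \<rat>" using ab by (simp add: N_def)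
  moreover have "inverse x = Complex (a / N) ((- b / N) * sqrt (real d))"
    using ab(3) by (simp add: complex_eq_iff N_def power_mult_distrib)
  ultimately show ?thesis
    by (intro imag_quad_fieldI[of "a / N" "- b / N"]) (use ab in simp_all)
qed

lemma imag_quad_field_divide:
  "x \<in> imag_quad_field d \<Longrightarrow> y \<in> imag_quad_field d \<Longrightarrow> x / y \<in> imag_quad_field d"
  by (simp add: divide_inverse imag_quad_field_mult imag_quad_field_inverse)

lemma imag_quad_field_Re_norm_Rats:
  assumes "x \<in> imag_quad_field d"
  shows "Re x \<in> \<rat>" "(cmod x)\<^sup>2 \<in> \<rat>"
proof -
  obtain a b where ab: "a \<in> \<rat>" "b \<in> \<rat>" "x = Complex a (b * sqrt (real d))"
    using assms by (rule imag_quad_fieldE)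
  then show "Re x \<in> \<rat>" by simp
  have "(cmod x)\<^sup>2 = a\<^sup>2 + b\<^sup>2 * real d" using ab(3) by (simp add: cmod_power2 power_mult_distrib)
  then show "(cmod x)\<^sup>2 \<in> \<rat>" using ab by simp
qed

definition coord_comb :: "mat2 list \<Rightarrow> (nat \<Rightarrow> complex) \<Rightarrow> mat2" where
  "coord_comb bs c = (\<Sum>i<length bs. smult2 (c i) (bs ! i))"

lemma coord_comb_linear:
  "coord_comb bs (\<lambda>i. p i - T * q i + D * r i)
    = coord_comb bs p - smult2 T (coord_comb bs q) + smult2 D (coord_comb bs r)"
  unfolding coord_comb_def smult2_def
  by (simp add: Finite_Cartesian_Product.vec_eq_iff sum_component sum.distrib sum_subtractf
      sum_distrib_left algebra_simps)

lemma coord_comb_scale: "coord_comb bs (\<lambda>i. T * q i) = smult2 T (coord_comb bs q)"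
  unfolding coord_comb_def smult2_def
  by (simp add: Finite_Cartesian_Product.vec_eq_iff sum_component sum_distrib_left algebra_simps)

lemma quaternion_subalgebra_coordinates:
  assumes "quaternion_subalgebra k B"
  obtains bs where "\<forall>z\<in>B. \<exists>c. (\<forall>i<4. c i \<in> k) \<and> z = coord_comb bs c"
    "\<forall>c. coord_comb bs c = 0 \<longrightarrow> (\<forall>i<4. c i = 0)" "length bs = 4"
proof -
  obtain bs where bs: "length bs = 4" "B = span_over k bs"
    and indep: "\<And>cs. length cs = 4 \<Longrightarrow> lin_comb cs bs = 0 \<Longrightarrow> \<forall>c\<in>set cs. c = 0"
    using assms unfolding quaternion_subalgebra_def by blast
  have lin_comb_eq: "lin_comb cs bs = coord_comb bs (\<lambda>i. cs ! i)" for cs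
    by (simp add: lin_comb_def coord_comb_def)
  show ?thesis
  proof (rule that[OF _ _ bs(1)])
    show "\<forall>z\<in>B. \<exists>c. (\<forall>i<4. c i \<in> k) \<and> z = coord_comb bs c"
    proof
      fix z assume "z \<in> B"
      obtain cs where "length cs = 4" "set cs \<subseteq> k" "z = lin_comb cs bs"
        using \<open>z \<in> B\<close> bs(1,2) unfolding span_over_def by auto
      then show "\<exists>c. (\<forall>i<4. c i \<in> k) \<and> z = coord_comb bs c"
        unfolding lin_comb_eq by (intro exI[of _ "nth cs"]) auto
    qed
    show "\<forall>c. coord_comb bs c = 0 \<longrightarrow> (\<forall>i<4. c i = 0)"
    proof (rule allI, rule impI)
      fix c assume "coord_comb bs c = 0"
      have "lin_comb (map c [0..<4]) bs = coord_comb bs c"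
        unfolding lin_comb_eq coord_comb_def bs(1) by (intro sum.cong) auto
      then show "\<forall>i<4. c i = 0" using indep[of "map c [0..<4]"] \<open>coord_comb bs c = 0\<close> by simp
    qed
  qed
qed

lemma coord_comb_proportional:
  assumes len: "length bs = 4" and minors: "\<forall>i<4. \<forall>j<4. \<alpha> i * \<beta> j - \<alpha> j * \<beta> i = 0"
    and i: "\<alpha> i \<noteq> 0" "i < 4"
  shows "coord_comb bs \<beta> = smult2 (\<beta> i / \<alpha> i) (coord_comb bs \<alpha>)"
proof -
  have "\<beta> j = \<beta> i / \<alpha> i * \<alpha> j" if "j < 4" for j
    using minors i that by (auto simp: field_simps)
  then have "coord_comb bs \<beta> = coord_comb bs (\<lambda>j. \<beta> i / \<alpha> i * \<alpha> j)"
    unfolding coord_comb_def len by (intro sum.cong) auto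
  then show ?thesis by (simp only: coord_comb_scale)
qed

lemma imag_quad_field_cramer:
  assumes minor: "\<alpha>1 * \<beta>2 - \<alpha>2 * \<beta>1 \<noteq> 0"
    and field: "\<alpha>1 \<in> imag_quad_field d" "\<alpha>2 \<in> imag_quad_field d" "\<beta>1 \<in> imag_quad_field d"
      "\<beta>2 \<in> imag_quad_field d" "\<gamma>1 \<in> imag_quad_field d" "\<gamma>2 \<in> imag_quad_field d"
    and rel: "\<gamma>1 = T * \<beta>1 - D * \<alpha>1" "\<gamma>2 = T * \<beta>2 - D * \<alpha>2"
  shows "D \<in> imag_quad_field d"
proof -
  have "\<gamma>1 * \<beta>2 - \<gamma>2 * \<beta>1 = - D * (\<alpha>1 * \<beta>2 - \<alpha>2 * \<beta>1)"
    unfolding rel by (simp add: algebra_simps)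
  then have "D = (\<gamma>2 * \<beta>1 - \<gamma>1 * \<beta>2) / (\<alpha>1 * \<beta>2 - \<alpha>2 * \<beta>1)"
    using minor by (simp add: field_simps)
  then show ?thesis
    using field by (metis imag_quad_field_diff imag_quad_field_mult imag_quad_field_divide)
qed

lemma coord_comb_cayley_hamilton:
  assumes indep: "\<forall>c. coord_comb bs c = 0 \<longrightarrow> (\<forall>i<4. c i = 0)"
    and \<alpha>: "mat 1 = coord_comb bs \<alpha>" and \<beta>: "y = coord_comb bs \<beta>"
    and \<gamma>: "y ** y = coord_comb bs \<gamma>" and i: "i < 4"
  shows "\<gamma> i = tr2 y * \<beta> i - det y * \<alpha> i"
proof -
  have "coord_comb bs (\<lambda>i. \<gamma> i - tr2 y * \<beta> i + det y * \<alpha> i)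
      = y ** y - smult2 (tr2 y) y + smult2 (det y) (mat 1)"
    by (simp only: coord_comb_linear flip: \<alpha> \<beta> \<gamma>)
  also have "\<dots> = 0" by (simp add: mat2_cayley_hamilton[of y])
  finally have "\<gamma> i - tr2 y * \<beta> i + det y * \<alpha> i = 0" using indep i by blast
  moreover have "\<gamma> i = (\<gamma> i - tr2 y * \<beta> i + det y * \<alpha> i) + tr2 y * \<beta> i - det y * \<alpha> i"
    by simp
  ultimately show ?thesis by simp
qed

lemma quaternion_subalgebra_det_in_field:
  assumes Q: "quaternion_subalgebra (imag_quad_field d) B" and y: "y \<in> B"
  shows "det y \<in> imag_quad_field d"
proof -
  let ?k = "imag_quad_field d"
  obtain bs where coords: "\<forall>z\<in>B. \<exists>c. (\<forall>i<4. c i \<in> ?k) \<and> z = coord_comb bs c"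
    and indep: "\<forall>c. coord_comb bs c = 0 \<longrightarrow> (\<forall>i<4. c i = 0)" and len: "length bs = 4"
    by (rule quaternion_subalgebra_coordinates[OF Q])
  have "mat 1 \<in> B" "y ** y \<in> B" using Q y by (auto simp: quaternion_subalgebra_def)
  obtain \<alpha> where \<alpha>: "\<forall>i<4. \<alpha> i \<in> ?k" "mat 1 = coord_comb bs \<alpha>"
    using coords \<open>mat 1 \<in> B\<close> by blast
  obtain \<beta> where \<beta>: "\<forall>i<4. \<beta> i \<in> ?k" "y = coord_comb bs \<beta>"
    using coords y by blast
  obtain \<gamma> where \<gamma>: "\<forall>i<4. \<gamma> i \<in> ?k" "y ** y = coord_comb bs \<gamma>"
    using coords \<open>y ** y \<in> B\<close> by blast
  have rel: "\<gamma> i = tr2 y * \<beta> i - det y * \<alpha> i" if "i < 4" for i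
    using coord_comb_cayley_hamilton[OF indep \<alpha>(2) \<beta>(2) \<gamma>(2) that] .
  show ?thesis
  proof (cases "\<exists>i<4. \<exists>j<4. \<alpha> i * \<beta> j - \<alpha> j * \<beta> i \<noteq> 0")
    case True
    then obtain i j where ij: "i < 4" "j < 4" "\<alpha> i * \<beta> j - \<alpha> j * \<beta> i \<noteq> 0" by blast
    show ?thesis
      by (rule imag_quad_field_cramer[OF ij(3) _ _ _ _ _ _ rel[OF ij(1)] rel[OF ij(2)]])
        (use ij \<alpha>(1) \<beta>(1) \<gamma>(1) in blast)+
  next
    case False
    have "\<exists>i<4. \<alpha> i \<noteq> 0"
    proof (rule ccontr)
      assume "\<not> (\<exists>i<4. \<alpha> i \<noteq> 0)"
      then have "coord_comb bs \<alpha> = 0" unfolding coord_comb_def len by (intro sum.neutral) auto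
      then show False using \<alpha>(2) mat2_one_neq_zero by simp
    qed
    then obtain i where i: "i < 4" "\<alpha> i \<noteq> 0" by blast
    define c where "c = \<beta> i / \<alpha> i"
    have "y = smult2 c (mat 1)"
      using coord_comb_proportional[of bs \<alpha> \<beta> i, OF len _ i(2,1)] False \<alpha>(2) \<beta>(2)
      by (auto simp: c_def)
    then have "det y = c * c" by (simp add: det_smult2_mat1 power2_eq_square)
    moreover have "c \<in> ?k" using i \<alpha>(1) \<beta>(1) by (simp add: c_def imag_quad_field_divide)
    ultimately show ?thesis by (simp add: imag_quad_field_mult)
  qed
qed

lemma real_rational_algebraic_int_is_int:
  assumes "algebraic_int (complex_of_real r)" "r \<in> \<rat>"
  shows "r \<in> \<int>"
proof -
  have "complex_of_real r \<in> \<rat>"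
    using assms(2) by (auto elim!: Rats_cases simp flip: of_rat_complex)
  then have "complex_of_real r \<in> \<int>"
    using assms(1) rational_algebraic_int_is_int by blast
  then obtain m where "complex_of_real r = of_int m" by (auto elim: Ints_cases)
  then have "r = of_int m" by (metis of_real_eq_iff of_real_of_int_eq)
  then show ?thesis by simp
qed

lemma imag_quad_field_algebraic_int_Ints:
  assumes k: "n \<in> imag_quad_field d" and ai: "algebraic_int n"
  shows "2 * Re n \<in> \<int>" "(cmod n)\<^sup>2 \<in> \<int>"
proof -
  have "algebraic_int (n + cnj n)" "algebraic_int (n * cnj n)"
    using ai by (simp_all add: algebraic_int_add algebraic_int_mult)
  moreover have "n + cnj n = complex_of_real (2 * Re n)" by (simp add: complex_add_cnj)
  moreover have "n * cnj n = complex_of_real ((cmod n)\<^sup>2)" by (rule sym, rule complex_norm_square)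
  ultimately show "2 * Re n \<in> \<int>" "(cmod n)\<^sup>2 \<in> \<int>"
    using imag_quad_field_Re_norm_Rats[OF k] by (simp_all add: real_rational_algebraic_int_is_int)
qed

lemma imag_quad_integer_norm_cases:
  assumes "n \<in> imag_quad_field d" "algebraic_int n" "n \<noteq> 0" "n \<noteq> 1"
  shows "(cmod n)\<^sup>2 \<ge> 2 \<or> (cmod n = 1 \<and> Re n \<le> 1/2)"
proof -
  obtain z N :: int where z: "2 * Re n = of_int z" and N: "(cmod n)\<^sup>2 = of_int N"
    using imag_quad_field_algebraic_int_Ints[OF assms(1,2)] by (metis Ints_cases)
  have "(0::real) < of_int N" using N assms(3) by (metis zero_less_norm_iff zero_less_power)
  then have "N \<ge> 1" by simp
  show ?thesis
  proof (cases "N \<ge> 2")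
    case True
    then show ?thesis using N by simp
  next
    case False
    then have "N = 1" using \<open>N \<ge> 1\<close> by simp
    then have "cmod n = 1" using N power2_eq_1_iff[of "cmod n"] norm_ge_zero[of n] by auto
    moreover have "Re n \<le> 1/2"
    proof (rule ccontr)
      assume "\<not> Re n \<le> 1/2"
      moreover have "Re n \<le> 1" using abs_Re_le_cmod[of n] \<open>cmod n = 1\<close> by simp
      ultimately have "(1::real) < of_int z" "of_int z \<le> (2::real)" using z by linarith+
      then have "z = 2" by simp
      then have "Re n = 1" using z by simp
      moreover have "(Re n)\<^sup>2 + (Im n)\<^sup>2 = 1" using cmod_power2[of n] \<open>cmod n = 1\<close> by simp
      ultimately have "n = 1" by (simp add: complex_eq_iff)
      then show False using assms(4) by simp
    qed
    ultimately show ?thesis by simp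
  qed
qed

section \<open>The eigenvalue \<open>lam\<close>\<close>

lemma ntr_cases: "ntr g = tr2 g \<or> ntr g = - tr2 g"
  by (auto simp: ntr_def)

lemma loxodromic_trace_neq:
  "loxodromic g \<Longrightarrow> -2 \<le> x \<Longrightarrow> x \<le> 2 \<Longrightarrow> tr2 g \<noteq> complex_of_real x"
  unfolding loxodromic_def by blast

lemma loxodromic_ntr_neq:
  assumes "loxodromic g" "-2 \<le> x" "x \<le> 2"
  shows "ntr g \<noteq> complex_of_real x"
proof -
  have "- tr2 g \<noteq> complex_of_real x"
  proof
    assume "- tr2 g = complex_of_real x"
    then have "tr2 g = complex_of_real (- x)" by (metis minus_minus of_real_minus)
    then show False using loxodromic_trace_neq[OF assms(1), of "- x"] assms(2,3) by simp
  qed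
  then show ?thesis using ntr_cases[of g] loxodromic_trace_neq[OF assms] by auto
qed

lemma quadratic_root_sum:
  fixes z \<tau> :: complex
  assumes "z\<^sup>2 - \<tau> * z + 1 = 0"
  shows "z \<noteq> 0" "\<tau> = z + 1 / z"
proof -
  show nz: "z \<noteq> 0" using assms by auto
  have "z * z + 1 = \<tau> * z" using assms by (simp add: power2_eq_square algebra_simps)
  then show "\<tau> = z + 1 / z" using nz by (simp add: field_simps)
qed

lemma quadratic_root_norm_gt_1_exists:
  fixes \<tau> :: complex
  assumes not_real: "\<And>x. -2 \<le> x \<Longrightarrow> x \<le> 2 \<Longrightarrow> \<tau> \<noteq> complex_of_real x"
  obtains z where "z\<^sup>2 - \<tau> * z + 1 = 0" "cmod z > 1"
proof -
  define s where "s = csqrt (\<tau>\<^sup>2 - 4)"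
  define z0 z1 where "z0 = (\<tau> + s) / 2" "z1 = (\<tau> - s) / 2"
  have "s\<^sup>2 = \<tau>\<^sup>2 - 4" by (simp add: s_def)
  then have prod: "z0 * z1 = 1" unfolding z0_z1_def by (simp add: field_simps power2_eq_square)
  have sum: "z0 + z1 = \<tau>" unfolding z0_z1_def by (simp add: field_simps)
  have root: "z\<^sup>2 - \<tau> * z + 1 = 0" if "z = z0 \<or> z = z1" for z
    using that prod unfolding sum[symmetric] by (auto simp: algebra_simps power2_eq_square)
  have norms: "cmod z0 * cmod z1 = 1" using prod by (metis norm_mult norm_one)
  consider "cmod z0 > 1" | "cmod z1 > 1" | "cmod z0 = 1"
  proof (cases "cmod z0 < 1")
    case True
    have "cmod z1 > 1"
    proof (rule ccontr)
      assume "\<not> cmod z1 > 1"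
      then have "cmod z0 * cmod z1 \<le> cmod z0" by (simp add: mult_left_le)
      then show False using True norms by linarith
    qed
    then show ?thesis using that by blast
  qed (use that in linarith)
  then show ?thesis
  proof cases
    case 3
    then have "z1 = cnj z0"
      using prod complex_norm_square[of z0] by (metis mult_left_cancel mult_zero_left norm_one one_power2 zero_neq_one of_real_1)
    then have "\<tau> = complex_of_real (2 * Re z0)" using sum by (simp add: complex_eq_iff)
    moreover have "\<bar>Re z0\<bar> \<le> 1" using abs_Re_le_cmod[of z0] 3 by simp
    ultimately show ?thesis using not_real[of "2 * Re z0"] by (auto simp: abs_le_iff)
  qed (use root that in blast)+
qed

lemma lam_root:
  assumes "loxodromic g"
  shows "(lam g)\<^sup>2 - ntr g * lam g + 1 = 0" "cmod (lam g) > 1"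
proof -
  obtain z where "z\<^sup>2 - ntr g * z + 1 = 0 \<and> cmod z > 1"
    using quadratic_root_norm_gt_1_exists loxodromic_ntr_neq[OF assms] by metis
  then have "(lam g)\<^sup>2 - ntr g * lam g + 1 = 0 \<and> cmod (lam g) > 1"
    unfolding lam_def by (rule someI)
  then show "(lam g)\<^sup>2 - ntr g * lam g + 1 = 0" "cmod (lam g) > 1" by auto
qed

lemma quadratic_root_norm_unique:
  fixes w z \<tau> :: complex
  assumes w: "w\<^sup>2 - \<tau> * w + 1 = 0" "cmod w > 1"
    and z: "z\<^sup>2 - \<tau>' * z + 1 = 0" "cmod z > 1" and \<tau>': "\<tau>' = \<tau> \<or> \<tau>' = - \<tau>"
  shows "cmod z = cmod w"
proof -
  obtain z' where z': "z'\<^sup>2 - \<tau> * z' + 1 = 0" "cmod z' = cmod z"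
  proof (cases "\<tau>' = \<tau>")
    case True
    then show ?thesis using that z by blast
  next
    case False
    then have "(- z)\<^sup>2 - \<tau> * (- z) + 1 = 0" using z(1) \<tau>' by simp
    then show ?thesis using that[of "- z"] by simp
  qed
  have "w \<noteq> 0" and \<tau>: "\<tau> = w + 1 / w" using quadratic_root_sum[OF w(1)] by auto
  have "(z' - w) * (z' - 1 / w) = z'\<^sup>2 - \<tau> * z' + 1"
    unfolding \<tau> using \<open>w \<noteq> 0\<close> by (simp add: field_simps power2_eq_square)
  then have "z' = w \<or> z' = 1 / w" using z'(1) by simp
  moreover have "cmod (1 / w) < 1" using w(2) by (simp add: norm_divide divide_less_eq_1)
  ultimately show ?thesis using z' z(2) by auto
qed

lemma norm_lam_mult_self:
  assumes lox: "loxodromic g" "loxodromic (g ** g)" and det: "det g = 1"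
  shows "cmod (lam (g ** g)) = (cmod (lam g))\<^sup>2"
proof -
  define l where "l = lam g"
  have "l \<noteq> 0" and ntr: "ntr g = l + 1 / l"
    using quadratic_root_sum[OF lam_root(1)[OF lox(1)]] by (simp_all add: l_def)
  have "tr2 (g ** g) = (ntr g)\<^sup>2 - 2"
    using tr2_mult_self[of g] det ntr_cases[of g] by auto
  then have "ntr (g ** g) = (ntr g)\<^sup>2 - 2 \<or> ntr (g ** g) = - ((ntr g)\<^sup>2 - 2)"
    using ntr_cases[of "g ** g"] by auto
  moreover have "(l\<^sup>2)\<^sup>2 - ((ntr g)\<^sup>2 - 2) * l\<^sup>2 + 1 = 0"
    unfolding ntr using \<open>l \<noteq> 0\<close> by (simp add: field_simps power2_eq_square)
  moreover have "cmod (l\<^sup>2) > 1"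
    using lam_root(2)[OF lox(1)] by (simp add: l_def norm_power one_less_power)
  ultimately have "cmod (lam (g ** g)) = cmod (l\<^sup>2)"
    using quadratic_root_norm_unique lam_root[OF lox(2)] by blast
  then show ?thesis by (simp add: l_def norm_power)
qed

lemma loxodromic_mult_self:
  assumes lox: "loxodromic g" and det: "det g = 1"
  shows "loxodromic (g ** g)"
  unfolding loxodromic_def
proof (clarify)
  fix x :: real
  assume x: "-2 \<le> x" "x \<le> 2" and eq: "tr2 (g ** g) = complex_of_real x"
  let ?r = "sqrt (x + 2)"
  have "(tr2 g)\<^sup>2 = (complex_of_real ?r)\<^sup>2"
    using eq tr2_mult_self[of g] det x by (simp add: algebra_simps flip: of_real_power)
  then have "tr2 g = complex_of_real ?r \<or> tr2 g = complex_of_real (- ?r)"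
    by (simp add: power2_eq_iff)
  moreover have "?r \<le> 2" "0 \<le> ?r" using x real_sqrt_le_mono[of "x + 2" 4] by simp_all
  then have "-2 \<le> ?r" "?r \<le> 2" "-2 \<le> - ?r" "- ?r \<le> 2" by linarith+
  ultimately show False
    using loxodromic_trace_neq[OF lox] by (metis of_real_minus)
qed

lemma add_inverse_le_imp_le:
  fixes s R :: real
  assumes "s > 1" "R > 1" "R + 1 / R \<le> s + 1 / s"
  shows "R \<le> s"
proof (rule ccontr)
  assume "\<not> R \<le> s"
  then have "0 < (R - s) * (R * s - 1) / (R * s)"
    using assms(1,2) by (intro divide_pos_pos mult_pos_pos) (auto simp: less_1_mult)
  also have "\<dots> = (R + 1 / R) - (s + 1 / s)"
    using assms(1,2) by (simp add: field_simps)
  finally show False using assms(3) by linarith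
qed

lemma norm_lam_ge_of_trace:
  assumes lox: "loxodromic h" and R: "R > 1" and tr: "R + 1 / R \<le> cmod (tr2 h)"
  shows "R \<le> cmod (lam h)"
proof (rule add_inverse_le_imp_le[OF lam_root(2)[OF lox] R])
  have "ntr h = lam h + 1 / lam h" using quadratic_root_sum[OF lam_root(1)[OF lox]] by simp
  then have "cmod (tr2 h) \<le> cmod (lam h) + cmod (1 / lam h)"
    using ntr_cases[of h] norm_triangle_ineq[of "lam h" "1 / lam h"] by auto
  then show "R + 1 / R \<le> cmod (lam h) + 1 / cmod (lam h)"
    using tr by (simp add: norm_divide)
qed

section \<open>Lower bounds for traces in the congruence subgroup\<close>

lemma sector_point_bounds:
  fixes R a b :: real
  assumes R: "R > 100" and ab: "a\<^sup>2 + b\<^sup>2 = R\<^sup>2" and b: "0 \<le> b" "4 * b \<le> a"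
  shows "4 \<le> a" "b\<^sup>2 \<le> R\<^sup>2"
proof -
  have "b\<^sup>2 \<le> a\<^sup>2" using b by (intro power_mono) auto
  moreover have "10000 < R\<^sup>2" using power_strict_mono[of 100 R 2] R by simp
  ultimately have "16 \<le> a\<^sup>2" using ab by linarith
  show "4 \<le> a"
    by (rule power2_le_imp_le) (use \<open>16 \<le> a\<^sup>2\<close> in simp, use b in linarith)
  show "b\<^sup>2 \<le> R\<^sup>2" using ab zero_le_power2[of a] by linarith
qed

lemma shifted_sector_point_estimate:
  fixes R a b p q :: real
  assumes R: "R > 100" and ab: "a\<^sup>2 + b\<^sup>2 = R\<^sup>2" and b: "0 \<le> b" "4 * b \<le> a"
    and p: "p \<ge> 1" and q: "\<bar>q\<bar> \<le> 2"
  shows "(R + 1/R)\<^sup>2 \<le> (a * (1 + 1/R\<^sup>2) + p)\<^sup>2 + (b * (1 - 1/R\<^sup>2) + q)\<^sup>2"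
proof -
  have a4: "4 \<le> a" and bR: "b\<^sup>2 \<le> R\<^sup>2" using sector_point_bounds[OF R ab b] by simp_all
  define e where "e = 1 / R\<^sup>2"
  have e: "0 \<le> e" "e \<le> 1" "e * R\<^sup>2 = 1" using R by (simp_all add: e_def)
  define A B where "A = a * (1 + e)" "B = b * (1 - e)"
  have "A\<^sup>2 + B\<^sup>2 = (a\<^sup>2 + b\<^sup>2) * (1 + e\<^sup>2) + 2 * e * (a\<^sup>2 - b\<^sup>2)"
    by (simp add: A_B_def power2_eq_square algebra_simps)
  also have "\<dots> = R\<^sup>2 + e * (e * R\<^sup>2) + 2 * (e * R\<^sup>2) - 4 * e * b\<^sup>2"
    unfolding ab[symmetric] by (simp add: algebra_simps power2_eq_square)
  finally have AB: "A\<^sup>2 + B\<^sup>2 = R\<^sup>2 + e + 2 - 4 * (e * b\<^sup>2)" using e(3) by simp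
  have "a \<le> A" using mult_nonneg_nonneg[of a e] a4 e(1) by (simp add: A_B_def algebra_simps)
  moreover have "A * 1 \<le> A * p" by (rule mult_left_mono[OF p]) (use a4 e in \<open>simp add: A_B_def\<close>)
  moreover have "- 2 * b \<le> B * q"
  proof -
    have B: "0 \<le> B" "B \<le> b" using b e mult_left_le[OF e(2) b(1)] by (auto simp: A_B_def algebra_simps)
    then have "- (B * 2) \<le> B * q"
      using q by (metis abs_le_iff abs_mult abs_of_nonneg minus_le_iff mult_left_mono)
    then show ?thesis using B by linarith
  qed
  moreover have "e * b\<^sup>2 \<le> 1" using mult_left_mono[OF bR e(1)] e(3) by simp
  moreover have "A\<^sup>2 + B\<^sup>2 + 2 * A * p + 2 * B * q \<le> (A + p)\<^sup>2 + (B + q)\<^sup>2"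
    by (simp add: power2_eq_square algebra_simps)
  moreover have "(R + 1/R)\<^sup>2 = R\<^sup>2 + 2 + e"
    using R by (simp add: e_def power2_eq_square field_simps)
  ultimately show ?thesis
    unfolding e_def[symmetric] A_B_def[symmetric] using AB a4 b(2) by linarith
qed

lemma cong_trace_norm_ge_large_norm:
  fixes R :: real and n t :: complex
  assumes R: "R > 100" and n2: "(cmod n)^2 \<ge> 2" and t: "cmod (t^2) \<ge> R - 3"
  shows "cmod (2 - t^2 * n) \<ge> R + 1/R"
proof -
  have "cmod n \<ge> 1.4"
  proof (rule ccontr)
    assume "\<not> cmod n \<ge> 1.4"
    then have "cmod n < 1.4" by simp
    then have "(cmod n)^2 < 1.4^2" by (intro power_strict_mono) auto
    then show False using n2 by (simp add: power2_eq_square)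
  qed
  then have "(R - 3) * 1.4 \<le> cmod (t^2) * cmod n"
    by (intro mult_mono) (use t R in auto)
  then have "cmod (t^2 * n) \<ge> (R - 3) * 1.4" by (simp add: norm_mult)
  moreover have "cmod (2 - t^2 * n) \<ge> cmod (t^2 * n) - 2"
    using norm_triangle_ineq3[of "t^2 * n" 2] by (simp add: norm_minus_commute)
  moreover have "1/R \<le> 1" using R by simp
  moreover have "(R - 3) * 1.4 = 1.4 * R - 4.2" by (simp add: field_simps)
  ultimately show ?thesis using R by linarith
qed

lemma sin_cos_small_angle:
  fixes \<phi> :: real
  assumes "0 \<le> \<phi>" "\<phi> < 1/5"
  shows "0 \<le> sin \<phi>" "4 * sin \<phi> \<le> cos \<phi>"
proof -
  show s0: "0 \<le> sin \<phi>" using assms pi_gt3 by (intro sin_ge_zero) auto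
  have s1: "sin \<phi> \<le> 1/5" using sin_x_le_x[of \<phi>] assms by simp
  have c0: "cos \<phi> \<ge> 0" using assms pi_gt3 by (intro cos_ge_zero) auto
  have "(sin \<phi>)\<^sup>2 \<le> (1/5)\<^sup>2" using s0 s1 by (intro power_mono) auto
  then have "(4/5)\<^sup>2 \<le> (cos \<phi>)\<^sup>2" unfolding cos_squared_eq by (simp add: power2_eq_square)
  then have "4/5 \<le> cos \<phi>" using c0 by (rule power2_le_imp_le)
  then show "4 * sin \<phi> \<le> cos \<phi>" using s1 by linarith
qed

lemma cong_trace_norm_ge_unit:
  fixes n l :: complex and R :: real
  assumes n1: "cmod n = 1" and nre: "Re n \<le> 1/2"
    and R: "R = (cmod l)^2" "R > 100"
    and b0: "0 \<le> Im (l^2)" and ba: "4 * Im (l^2) \<le> Re (l^2)"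
  shows "cmod (2 - (l + 1/l)^2 * n) \<ge> R + 1/R"
proof -
  define u where "u = l^2"
  define a b where "a = Re u" "b = Im u"
  have lnz: "l \<noteq> 0" using R by auto
  have cu: "cmod u = R" using R(1) by (simp add: u_def norm_power)
  have ab: "a^2 + b^2 = R^2" using cu by (simp add: a_b_def cmod_power2 flip: cmod_power2)
  have t2: "(l + 1/l)^2 = u + 2 + 1/u" using lnz by (simp add: u_def field_simps power2_eq_square)
  have nn: "n * cnj n = 1" using complex_norm_square[of n] n1 by simp
  define Z where "Z = u + 1/u + (2 - 2 * cnj n)"
  have "cmod (2 - (l + 1/l)^2 * n) = cmod ((2 - (l + 1/l)^2 * n) * cnj n)"
    using n1 by (simp add: norm_mult)
  also have "(2 - (l + 1/l)^2 * n) * cnj n = 2 * cnj n - (l + 1/l)^2 * (n * cnj n)"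
    by (simp add: algebra_simps)
  also have "\<dots> = - Z"
    unfolding nn t2 Z_def by (simp add: algebra_simps)
  finally have eqZ: "cmod (2 - (l + 1/l)^2 * n) = cmod Z" by simp
  have ReZ: "Re Z = a * (1 + 1/R^2) + (2 - 2 * Re n)"
    unfolding Z_def using ab by (simp add: a_b_def inverse_eq_divide field_simps Re_divide)
  have ImZ: "Im Z = b * (1 - 1/R^2) + 2 * Im n"
    unfolding Z_def using ab by (simp add: a_b_def inverse_eq_divide field_simps Im_divide)
  have q: "\<bar>2 * Im n\<bar> \<le> 2" using abs_Im_le_cmod[of n] n1 by simp
  have "(R + 1/R)^2 \<le> (Re Z)^2 + (Im Z)^2"
    unfolding ReZ ImZ
    by (rule shifted_sector_point_estimate) (use R ab b0 ba nre q in \<open>auto simp: a_b_def u_def\<close>)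
  also have "\<dots> = (cmod Z)^2" by (simp add: cmod_power2)
  finally have "(R + 1/R)^2 \<le> (cmod Z)^2" .
  then have "R + 1/R \<le> cmod Z" by (rule power2_le_imp_le) simp
  then show ?thesis using eqZ by simp
qed

lemma cong_trace_norm_ge:
  fixes l n :: complex
  assumes n: "n \<in> imag_quad_field d" "algebraic_int n" "n \<noteq> 0" "n \<noteq> 1"
    and l: "cmod l > 10" and arg: "0 \<le> 2 * Arg l" "2 * Arg l < 1/5"
  shows "(cmod l)\<^sup>2 + 1 / (cmod l)\<^sup>2 \<le> cmod (2 - (l + 1 / l)\<^sup>2 * n)"
proof -
  define R where "R = (cmod l)\<^sup>2"
  have "10\<^sup>2 < R" unfolding R_def using l by (intro power_strict_mono) auto
  then have R: "R > 100" by simp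
  consider "(cmod n)\<^sup>2 \<ge> 2" | "cmod n = 1" "Re n \<le> 1/2"
    using imag_quad_integer_norm_cases[OF n] by blast
  then show ?thesis
  proof cases
    case 1
    have "l \<noteq> 0" using l by auto
    then have "l\<^sup>2 = ((l + 1 / l)\<^sup>2 - 2) - 1 / l\<^sup>2" by (simp add: field_simps power2_eq_square)
    then have "R = cmod (((l + 1 / l)\<^sup>2 - 2) - 1 / l\<^sup>2)" by (simp add: R_def norm_power)
    also have "\<dots> \<le> cmod ((l + 1 / l)\<^sup>2 - 2) + cmod (1 / l\<^sup>2)" by (rule norm_triangle_ineq4)
    also have "cmod ((l + 1 / l)\<^sup>2 - 2) \<le> cmod ((l + 1 / l)\<^sup>2) + 2"
      using norm_triangle_ineq4[of "(l + 1 / l)\<^sup>2" 2] by simp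
    finally have "R \<le> cmod ((l + 1 / l)\<^sup>2) + 2 + cmod (1 / l\<^sup>2)" by simp
    moreover have "cmod (1 / l\<^sup>2) \<le> 1"
      using l by (simp add: norm_divide norm_power divide_le_eq_1 one_le_power)
    ultimately have "R - 3 \<le> cmod ((l + 1 / l)\<^sup>2)" by linarith
    then show ?thesis
      using cong_trace_norm_ge_large_norm[OF R 1] by (simp add: R_def)
  next
    case 2
    have "l\<^sup>2 = rcis R (2 * Arg l)"
      using DeMoivre2[of "cmod l" "Arg l" 2] by (simp add: rcis_cmod_Arg R_def mult.commute)
    moreover have "0 \<le> R * sin (2 * Arg l)" "R * (4 * sin (2 * Arg l)) \<le> R * cos (2 * Arg l)"
      using sin_cos_small_angle[OF arg] R by simp_all
    ultimately show ?thesis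
      using cong_trace_norm_ge_unit[OF 2 R_def R] by (simp add: R_def)
  qed
qed

section \<open>The systole of the congruence subgroup\<close>

lemma norm_lam_eq_of_trace:
  assumes "loxodromic h" "loxodromic h'" "tr2 h' = tr2 h \<or> tr2 h' = - tr2 h"
  shows "cmod (lam h') = cmod (lam h)"
proof (rule quadratic_root_norm_unique[OF lam_root[OF assms(1)] lam_root[OF assms(2)]])
  show "ntr h' = ntr h \<or> ntr h' = - ntr h"
    using assms(3) ntr_cases[of h] ntr_cases[of h'] by auto
qed

lemma mult_self_in_cong_subgroup:
  assumes ord: "is_order k B Ord" and G: "sl2_preimage_group Gt" "Gt \<subseteq> norm_one Ord"
    and g: "g \<in> Gt"
  shows "g ** g \<in> cong_subgroup Ord Gt (ntr g)"
proof -
  have gO: "g \<in> Ord" and det: "det g = 1" using G(2) g by (auto simp: norm_one_def)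
  have closed: "x ** y \<in> Ord" "- x \<in> Ord" if "x \<in> Ord" "y \<in> Ord" for x y
    using ord that unfolding is_order_def by (metis diff_self diff_0)+
  have "- (g ** g) - mat 1 = smult2 (ntr g) (- g) \<or> - (g ** g) - mat 1 = smult2 (ntr g) g"
    using mat2_cayley_hamilton[of g] det ntr_cases[of g] by (auto simp: smult2_uminus)
  then have "\<exists>x\<in>Ord. - (g ** g) - mat 1 = smult2 (ntr g) x"
    using gO closed by blast
  moreover have "- (g ** g) \<in> Ord" "det (- (g ** g)) = 1"
    using closed gO by (simp_all add: det_uminus_mat2 det_mul det)
  moreover have "g ** g \<in> Gt" using G(1) g by (simp add: sl2_preimage_group_def)
  ultimately show ?thesis unfolding cong_subgroup_def norm_one_cong_def norm_one_def by blast
qed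

lemma cong_subgroup_trace:
  assumes h: "h \<in> cong_subgroup Ord Gt t" and t: "t \<noteq> 0"
  obtains x where "x \<in> Ord" "tr2 h = 2 - t\<^sup>2 * det x \<or> tr2 h = - (2 - t\<^sup>2 * det x)"
proof -
  obtain h' where h': "h' \<in> norm_one_cong Ord t" "tr2 h = tr2 h' \<or> tr2 h = - tr2 h'"
  proof (cases "h \<in> norm_one_cong Ord t")
    case True
    then show ?thesis using that[of h] by simp
  next
    case False
    then have "- h \<in> norm_one_cong Ord t" using h by (simp add: cong_subgroup_def)
    then show ?thesis using that[of "- h"] by (simp add: tr2_uminus)
  qed
  then obtain x where x: "x \<in> Ord" "h' = mat 1 + smult2 t x" and det: "det h' = 1"
    unfolding norm_one_cong_def norm_one_def by (auto simp: algebra_simps)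
  have "t * (tr2 x + t * det x) = 0"
    using det det_mat1_add_smult2[of t x] x(2) by (simp add: algebra_simps power2_eq_square)
  then have "tr2 x = - t * det x" using t by (simp add: add_eq_0_iff)
  then have "tr2 h' = 2 - t\<^sup>2 * det x"
    using x(2) tr2_mat1_add_smult2[of t x] by (simp add: power2_eq_square)
  then show ?thesis using that x(1) h'(2) by auto
qed

lemma order_det_imag_quad_integer:
  assumes Q: "quaternion_subalgebra (imag_quad_field d) B"
    and ord: "is_order (imag_quad_field d) B Ord" and x: "x \<in> Ord"
  shows "det x \<in> imag_quad_field d" "algebraic_int (det x)"
  using order_det_algebraic_int[OF ord imag_quad_field_0 imag_quad_field_1 x]
    quaternion_subalgebra_det_in_field[OF Q] x ord by (auto simp: is_order_def)

lemma norm_lam_gt_of_transl_len: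
  assumes "loxodromic g" "transl_len g > 2 * ln c" "c > 0"
  shows "cmod (lam g) > c"
proof -
  have "ln c < ln (cmod (lam g))" using assms(2) by (simp add: transl_len_def)
  then show ?thesis
    using assms(3) lam_root(2)[OF assms(1)] by (subst (asm) ln_less_cancel_iff) auto
qed

lemma transl_len_mult_self_le:
  assumes Q: "quaternion_subalgebra (imag_quad_field d) B"
    and ord: "is_order (imag_quad_field d) B Ord"
    and g: "loxodromic g" "det g = 1" "transl_len g > 2 * ln 10" "0 \<le> hol g" "hol g < 1/5"
    and h: "h \<in> cong_subgroup Ord Gt (ntr g)" "loxodromic h"
  shows "transl_len (g ** g) \<le> transl_len h"
proof -
  define l where "l = lam g"
  have l1: "cmod l > 1" and ntr: "ntr g = l + 1 / l"
    using lam_root[OF g(1)] quadratic_root_sum[OF lam_root(1)[OF g(1)]] by (simp_all add: l_def)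
  have l10: "cmod l > 10" using norm_lam_gt_of_transl_len[OF g(1,3)] by (simp add: l_def)
  have "ntr g \<noteq> 0" using loxodromic_ntr_neq[OF g(1), of 0] by simp
  then obtain x where x: "x \<in> Ord"
    and tr_h: "tr2 h = 2 - (ntr g)\<^sup>2 * det x \<or> tr2 h = - (2 - (ntr g)\<^sup>2 * det x)"
    using cong_subgroup_trace[OF h(1)] by blast
  have lox_gg: "loxodromic (g ** g)" using loxodromic_mult_self[OF g(1,2)] .
  have norm_gg: "cmod (lam (g ** g)) = (cmod l)\<^sup>2"
    using norm_lam_mult_self[OF g(1) lox_gg g(2)] by (simp add: l_def)
  have "(cmod l)\<^sup>2 \<le> cmod (lam h)"
  proof (cases "det x = 1")
    case True
    have "tr2 (g ** g) = (ntr g)\<^sup>2 - 2" using tr2_mult_self[of g] g(2) ntr_cases[of g] by auto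
    then have "cmod (lam h) = cmod (lam (g ** g))"
      using norm_lam_eq_of_trace[OF lox_gg h(2)] tr_h True by auto
    then show ?thesis using norm_gg by simp
  next
    case False
    have "det x \<in> imag_quad_field d" "algebraic_int (det x)"
      using order_det_imag_quad_integer[OF Q ord x] by simp_all
    moreover have "det x \<noteq> 0"
    proof
      assume "det x = 0"
      then have "tr2 h = complex_of_real 2 \<or> tr2 h = complex_of_real (- 2)" using tr_h by simp
      then show False
        using loxodromic_trace_neq[OF h(2), of 2] loxodromic_trace_neq[OF h(2), of "- 2"] by auto
    qed
    moreover have "0 \<le> 2 * Arg l" "2 * Arg l < 1/5" using g(4,5) by (simp_all add: hol_def l_def)
    ultimately have trace: "(cmod l)\<^sup>2 + 1 / (cmod l)\<^sup>2 \<le> cmod (tr2 h)"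
      using cong_trace_norm_ge[of "det x" d l] l10 False tr_h ntr by (auto simp: norm_minus_commute)
    show ?thesis
      by (rule norm_lam_ge_of_trace[OF h(2) _ trace]) (use l1 in \<open>simp add: one_less_power\<close>)
  qed
  then have "ln ((cmod l)\<^sup>2) \<le> ln (cmod (lam h))" using l1 by (intro ln_mono) auto
  then show ?thesis using norm_gg by (simp add: transl_len_def)
qed

theorem proposition7p3:
  fixes d :: nat and k :: "complex set" and B Ord Gt :: "mat2 set"
  assumes "d > 0" and "k = imag_quad_field d"
    and "arith_derived k B Ord Gt"
  shows "\<exists>L \<epsilon>. L > 0 \<and> \<epsilon> > 0 \<and>
    (\<forall>g\<in>Gt. loxodromic g \<and> transl_len g > L \<and> 0 \<le> hol g \<and> hol g < \<epsilon> \<longrightarrow>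
       (g ** g \<in> cong_subgroup Ord Gt (ntr g) \<and> loxodromic (g ** g) \<and>
        (\<forall>h\<in>cong_subgroup Ord Gt (ntr g). loxodromic h \<longrightarrow> transl_len (g ** g) \<le> transl_len h)))"
proof -
  have Q: "quaternion_subalgebra k B" and ord: "is_order k B Ord"
    and G: "sl2_preimage_group Gt" "Gt \<subseteq> norm_one Ord"
    using assms(3) by (simp_all add: arith_derived_def)
  have "g ** g \<in> cong_subgroup Ord Gt (ntr g) \<and> loxodromic (g ** g) \<and>
      (\<forall>h\<in>cong_subgroup Ord Gt (ntr g). loxodromic h \<longrightarrow> transl_len (g ** g) \<le> transl_len h)"
    if "g \<in> Gt" "loxodromic g" "transl_len g > 2 * ln 10" "0 \<le> hol g" "hol g < 1/5" for g
  proof -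
    have "det g = 1" using G(2) that(1) by (auto simp: norm_one_def)
    then show ?thesis
      using that mult_self_in_cong_subgroup[OF ord G that(1)] loxodromic_mult_self
        transl_len_mult_self_le[OF Q[unfolded assms(2)] ord[unfolded assms(2)]] by blast
  qed
  then show ?thesis by (intro exI[of _ "2 * ln 10"] exI[of _ "1/5 :: real"]) auto
qed

end
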